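(* There exists an invertible $22\times22$ binary matrix such that the corresponding linear kernel has partial distance sequence $(1,2,2,2,2,2,4,4,4,4,4,4,8,8,8,8,8,8,8,12,12,16)$. Consequently $E_{22}\ge\frac1{22}\sum_{i=0}^{21}\log_{22}D_{min}^{(i)}\approx0.50118$.
   Context: A kernel of dimension $\ell$ is a bijection $g:\{0,1\}^\ell\to\{0,1\}^\ell$; a linear kernel is $g({\bf u})={\bf u}G$ over $\mathbb{F}_2$ for an invertible $\ell\times\ell$ binary matrix $G$. ${\bf a}\bullet{\bf b}$ denotes concatenation, $d_H$ Hamming distance. Partial distances: $D_{min}^{(i)}=\min\{d_H(g({\bf w}\bullet 0\bullet{\bf u}),g({\bf w}\bullet 1\bullet {\bf v})) : {\bf w}\in\{0,1\}^i,\ {\bf u},{\bf v}\in\{0,1\}^{\ell-i-1}\}$, $i=0,\dots,\ell-1$; exponent $E(g)=\frac1\ell\sum_{i}\log_\ell D_{min}^{(i)}$; $E_\ell=\max_g E(g)$ over all kernels of dimension $\ell$. *)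

theory Defs
  imports Complex_Main "HOL-Library.Z2"
begin

definition bvecs :: "nat \<Rightarrow> bit list set" where
  "bvecs l = {xs. length xs = l}"

definition hdist :: "bit list \<Rightarrow> bit list \<Rightarrow> nat" where
  "hdist x y = card {i. i < length x \<and> x ! i \<noteq> y ! i}"

definition is_kernel :: "nat \<Rightarrow> (bit list \<Rightarrow> bit list) \<Rightarrow> bool" where
  "is_kernel l g \<longleftrightarrow> bij_betw g (bvecs l) (bvecs l)"

definition mat_invertible :: "nat \<Rightarrow> (nat \<Rightarrow> nat \<Rightarrow> bit) \<Rightarrow> bool" where
  "mat_invertible l G \<longleftrightarrow> (\<exists>H. \<forall>i<l. \<forall>j<l.
      (\<Sum>k<l. G i k * H k j) = (if i = j then 1 else 0) \<and>
      (\<Sum>k<l. H i k * G k j) = (if i = j then 1 else 0))"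

definition lin_kernel :: "nat \<Rightarrow> (nat \<Rightarrow> nat \<Rightarrow> bit) \<Rightarrow> bit list \<Rightarrow> bit list" where
  "lin_kernel l G u = map (\<lambda>j. \<Sum>i<l. u ! i * G i j) [0..<l]"

definition partial_dist :: "nat \<Rightarrow> (bit list \<Rightarrow> bit list) \<Rightarrow> nat \<Rightarrow> nat" where
  "partial_dist l g i = Min {hdist (g (w @ [0] @ u)) (g (w @ [1] @ v)) | w u v.
      length w = i \<and> length u = l - i - 1 \<and> length v = l - i - 1}"

definition kernel_exponent :: "nat \<Rightarrow> (bit list \<Rightarrow> bit list) \<Rightarrow> real" where
  "kernel_exponent l g = (1 / real l) * (\<Sum>i<l. log (real l) (real (partial_dist l g i)))"

text \<open>E_l: maximum exponent over all kernels of dimension l (the set of values is finite).\<close>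
definition E_max :: "nat \<Rightarrow> real" where
  "E_max l = Max {kernel_exponent l g | g. is_kernel l g}"

end

theory Submission
  imports Defs "HOL-Decision_Procs.Approximation_Bounds"
begin

text \<open>For a linear kernel \<open>u \<mapsto> u G\<close> the $i$-th partial distance is the least weight of
  a word in the coset $G_i + \langle G_{i+1}, \dots, G_{21}\rangle$ of the code spanned by
  the later rows, and it is attained by the row $G_i$ itself. For the explicit matrix the lower
  bounds come from four sources: invertibility (no such word vanishes), even weight of all
  rows but the first, six parity checks with pairwise distinct columns (among them the all-ones
  word) annihilating rows 6 to 21, which rule out weight 2, and for $i \ge 12$ an exhaustive
  search through the at most $2^9$ words of the coset. The exponent then equals
  $(46 \log 2 + 2 \log 3) / (22 \log 22)$, estimated via the logarithms of
  10/9, 25/24, 81/80 and 121/120.\<close>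

text \<open>The default simp rules rewrite \<open>+\<close> and \<open>*\<close> on bits into \<open>xor\<close> and \<open>and\<close>,
  which defeats ring reasoning and makes the simplifier loop below.\<close>
declare add_bit_eq_xor [simp del] mult_bit_eq_and [simp del]

section \<open>Weights of binary words\<close>

lemma bit_neq_iff_add: "((x::bit) \<noteq> y) \<longleftrightarrow> x + y \<noteq> 0"
  by (cases x; cases y) (simp_all add: add_bit_eq_xor)

lemma of_nat_bit_eq_0_iff: "(of_nat n :: bit) = 0 \<longleftrightarrow> even n"
  by (induction n) (simp_all add: add_bit_eq_xor)

definition weight :: "bit list \<Rightarrow> nat" where
  "weight x = length (filter (\<lambda>b. b \<noteq> 0) x)"

definition dot :: "'a::semiring_0 list \<Rightarrow> 'a list \<Rightarrow> 'a" where
  "dot x y = sum_list (map2 (*) x y)"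

lemma weight_conv_card: "weight x = card {j. j < length x \<and> x ! j \<noteq> 0}"
  by (simp add: weight_def length_filter_conv_card)

lemma weight_le_length: "weight x \<le> length x"
  by (simp add: weight_def)

lemma hdist_le_length: "hdist x y \<le> length x"
proof -
  have "hdist x y \<le> card {..<length x}" unfolding hdist_def by (rule card_mono) auto
  then show ?thesis by simp
qed

lemma hdist_eq_weight:
  assumes "length x = length y"
  shows "hdist x y = weight (map2 (+) x y)"
  unfolding hdist_def weight_conv_card
  by (rule arg_cong[where f = card]) (use assms bit_neq_iff_add in auto)

lemma dot_eq_sum:
  "length x = n \<Longrightarrow> length y = n \<Longrightarrow> dot x y = (\<Sum>j<n. x ! j * y ! j)"
  by (simp add: dot_def sum_list_sum_nth atLeast0LessThan)

lemma dot_eq_sum_support: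
  fixes x y :: "bit list"
  assumes "length y = length x"
  shows "dot x y = (\<Sum>j | j < length x \<and> x ! j \<noteq> 0. y ! j)"
proof -
  have "dot x y = (\<Sum>j<length x. if x ! j \<noteq> 0 then y ! j else 0)"
    unfolding dot_eq_sum[OF refl assms] by (intro sum.cong refl) auto
  also have "\<dots> = (\<Sum>j | j < length x \<and> x ! j \<noteq> 0. y ! j)"
    by (simp add: sum.inter_filter[symmetric] lessThan_def)
  finally show ?thesis .
qed

lemma even_weight_if_dot_ones:
  assumes "dot x (replicate (length x) 1) = 0"
  shows "even (weight x)"
proof -
  have "(of_nat (weight x) :: bit) = dot x (replicate (length x) 1)"
    by (simp add: dot_eq_sum_support weight_conv_card)
  then show ?thesis using assms by (simp add: of_nat_bit_eq_0_iff)
qed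

lemma weight_ge_2:
  assumes "0 < weight x" and "dot x (replicate (length x) 1) = 0"
  shows "2 \<le> weight x"
  using even_weight_if_dot_ones[OF assms(2)] assms(1) by presburger

lemma length_transpose_rows:
  "xs \<noteq> [] \<Longrightarrow> \<forall>r\<in>set xs. length r = n \<Longrightarrow> length (transpose xs) = n"
proof (induction xs)
  case (Cons r rs)
  then show ?case by (cases "rs = []") (auto simp: length_transpose)
qed simp

text \<open>A support of size 2 is impossible: the two corresponding columns of \<open>Hs\<close> would agree.\<close>
lemma weight_ge_4:
  assumes "0 < weight x"
    and ones: "replicate (length x) 1 \<in> set Hs"
    and orth: "\<forall>h\<in>set Hs. length h = length x \<and> dot x h = 0"
    and columns: "distinct (transpose Hs)"
  shows "4 \<le> weight x"
proof -
  have "2 \<le> weight x" using weight_ge_2 assms by blast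
  moreover have "even (weight x)" using even_weight_if_dot_ones ones orth by blast
  moreover have "weight x \<noteq> 2"
  proof
    assume "weight x = 2"
    then obtain a b where ab: "{j. j < length x \<and> x ! j \<noteq> 0} = {a, b}" "a \<noteq> b"
      by (auto simp: weight_conv_card card_2_iff)
    then have "a < length x" "b < length x" by auto
    moreover have "length (transpose Hs) = length x"
      using ones orth by (intro length_transpose_rows) auto
    ultimately have "transpose Hs ! a \<noteq> transpose Hs ! b"
      using columns ab(2) by (simp add: nth_eq_iff_index_eq)
    then obtain h where h: "h \<in> set Hs" "h ! a \<noteq> h ! b"
      using \<open>a < length x\<close> \<open>b < length x\<close> \<open>length (transpose Hs) = length x\<close> orth
      by (auto simp: nth_transpose)
    have "dot x h = h ! a + h ! b"
      using h(1) orth ab by (simp add: dot_eq_sum_support)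
    then show False using h orth bit_neq_iff_add by metis
  qed
  ultimately show ?thesis by presburger
qed

section \<open>Linear kernels\<close>

lemma length_lin_kernel [simp]: "length (lin_kernel n G u) = n"
  by (simp add: lin_kernel_def)

lemma nth_lin_kernel: "j < n \<Longrightarrow> lin_kernel n G u ! j = (\<Sum>i<n. u ! i * G i j)"
  by (simp add: lin_kernel_def)

lemma lin_kernel_add:
  assumes "length u = n" "length v = n"
  shows "lin_kernel n G (map2 (+) u v) = map2 (+) (lin_kernel n G u) (lin_kernel n G v)"
  by (rule nth_equalityI) (simp_all add: assms nth_lin_kernel distrib_right sum.distrib)

lemma lin_kernel_zero: "lin_kernel n G (replicate n 0) = replicate n 0"
  by (rule nth_equalityI) (simp_all add: nth_lin_kernel)

lemma lin_kernel_unit: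
  assumes "k < n"
  shows "lin_kernel n G (replicate k 0 @ 1 # replicate (n - Suc k) 0) = map (G k) [0..<n]"
proof (rule nth_equalityI)
  fix j assume "j < length (lin_kernel n G (replicate k 0 @ 1 # replicate (n - Suc k) 0))"
  then have j: "j < n" by simp
  have "(replicate k 0 @ 1 # replicate (n - Suc k) 0) ! i * G i j = (if i = k then G k j else 0)"
    if "i < n" for i :: nat
    using that by (auto simp: nth_append nth_Cons split: nat.split)
  then have "lin_kernel n G (replicate k 0 @ 1 # replicate (n - Suc k) 0) ! j
      = (\<Sum>i<n. if i = k then G k j else 0)"
    unfolding nth_lin_kernel[OF j] by (intro sum.cong) auto
  then show "lin_kernel n G (replicate k 0 @ 1 # replicate (n - Suc k) 0) ! j = map (G k) [0..<n] ! j"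
    using assms j by simp
qed simp

lemma lin_kernel_inverse:
  assumes inv: "\<forall>i<n. \<forall>m<n. (\<Sum>j<n. G i j * H j m) = (if i = m then 1 else 0)"
    and "length u = n"
  shows "lin_kernel n H (lin_kernel n G u) = u"
proof (rule nth_equalityI)
  fix m assume "m < length (lin_kernel n H (lin_kernel n G u))"
  then have m: "m < n" by simp
  have "lin_kernel n H (lin_kernel n G u) ! m = (\<Sum>j<n. \<Sum>i<n. u ! i * (G i j * H j m))"
    by (simp add: m nth_lin_kernel sum_distrib_right mult.assoc)
  also have "\<dots> = (\<Sum>i<n. u ! i * (\<Sum>j<n. G i j * H j m))"
    by (subst sum.swap) (simp add: sum_distrib_left)
  also have "\<dots> = (\<Sum>i<n. if i = m then u ! m else 0)"
    using inv m by (intro sum.cong) auto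
  also have "\<dots> = u ! m" using m by simp
  finally show "lin_kernel n H (lin_kernel n G u) ! m = u ! m" .
qed (simp add: assms)

lemma is_kernel_lin_kernel:
  assumes "mat_invertible n G"
  shows "is_kernel n (lin_kernel n G)"
proof -
  obtain H where "\<forall>i<n. \<forall>j<n. (\<Sum>k<n. G i k * H k j) = (if i = j then 1 else 0)"
    and "\<forall>i<n. \<forall>j<n. (\<Sum>k<n. H i k * G k j) = (if i = j then 1 else 0)"
    using assms unfolding mat_invertible_def by blast
  then show ?thesis
    unfolding is_kernel_def bvecs_def
    by (intro bij_betw_byWitness[where f' = "lin_kernel n H"]) (auto simp: lin_kernel_inverse)
qed

lemma weight_lin_kernel_pos:
  assumes "mat_invertible n G" "length u = n" "u \<noteq> replicate n 0"
  shows "0 < weight (lin_kernel n G u)"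
proof (rule ccontr)
  obtain H where inv: "\<forall>i<n. \<forall>j<n. (\<Sum>k<n. G i k * H k j) = (if i = j then 1 else 0)"
    using assms(1) unfolding mat_invertible_def by blast
  assume "\<not> 0 < weight (lin_kernel n G u)"
  then have "lin_kernel n G u = replicate n 0"
    by (intro nth_equalityI) (auto simp: weight_def filter_empty_conv in_set_conv_nth)
  then have "u = lin_kernel n H (replicate n 0)"
    using lin_kernel_inverse[OF inv assms(2)] by simp
  then show False using assms(3) by (simp add: lin_kernel_zero)
qed

lemma hdist_lin_kernel:
  assumes "length u = n" "length v = n"
  shows "hdist (lin_kernel n G u) (lin_kernel n G v) = weight (lin_kernel n G (map2 (+) u v))"
  by (simp add: hdist_eq_weight lin_kernel_add assms)

lemma partial_dist_lin_kernel:
  assumes "k < n"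
  shows "partial_dist n (lin_kernel n G) k
    = Min {weight (lin_kernel n G m) | m. length m = n \<and> (\<forall>i<k. m ! i = 0) \<and> m ! k = 1}"
  unfolding partial_dist_def
proof (rule arg_cong[where f = Min], intro equalityI subsetI)
  fix d assume "d \<in> {hdist (lin_kernel n G (w @ [0] @ u)) (lin_kernel n G (w @ [1] @ v)) | w u v.
      length w = k \<and> length u = n - k - 1 \<and> length v = n - k - 1}"
  then obtain w u v where d: "d = hdist (lin_kernel n G (w @ [0] @ u)) (lin_kernel n G (w @ [1] @ v))"
    and len: "length w = k" "length u = n - k - 1" "length v = n - k - 1"
    by blast
  let ?m = "map2 (+) (w @ [0] @ u) (w @ [1] @ v)"
  have "d = weight (lin_kernel n G ?m)"
    unfolding d using assms len by (intro hdist_lin_kernel) auto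
  moreover have "length ?m = n" "\<forall>i<k. ?m ! i = 0" "?m ! k = 1"
    using assms len by (auto simp: nth_append)
  ultimately show "d \<in> {weight (lin_kernel n G m) | m. length m = n \<and> (\<forall>i<k. m ! i = 0) \<and> m ! k = 1}"
    by blast
next
  fix d assume "d \<in> {weight (lin_kernel n G m) | m. length m = n \<and> (\<forall>i<k. m ! i = 0) \<and> m ! k = 1}"
  then obtain m where d: "d = weight (lin_kernel n G m)"
    and m: "length m = n" "\<forall>i<k. m ! i = 0" "m ! k = 1"
    by blast
  let ?w = "replicate k (0::bit)" and ?u = "replicate (n - k - 1) (0::bit)" and ?v = "drop (Suc k) m"
  have "map2 (+) (?w @ [0] @ ?u) (?w @ [1] @ ?v) = m"
    using assms m by (intro nth_equalityI) (auto simp: nth_append nth_Cons')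
  then have "d = hdist (lin_kernel n G (?w @ [0] @ ?u)) (lin_kernel n G (?w @ [1] @ ?v))"
    unfolding d using assms m(1) by (subst hdist_lin_kernel) auto
  moreover have "length ?w = k" "length ?u = n - k - 1" "length ?v = n - k - 1"
    using m(1) by auto
  ultimately show "d \<in> {hdist (lin_kernel n G (w @ [0] @ u)) (lin_kernel n G (w @ [1] @ v)) | w u v.
      length w = k \<and> length u = n - k - 1 \<and> length v = n - k - 1}"
    by blast
qed

lemma partial_dist_lin_kernel_eqI:
  assumes "k < n"
    and lower: "\<And>m. length m = n \<Longrightarrow> \<forall>i<k. m ! i = 0 \<Longrightarrow> m ! k = 1 \<Longrightarrow> d \<le> weight (lin_kernel n G m)"
    and row: "weight (map (G k) [0..<n]) = d"
  shows "partial_dist n (lin_kernel n G) k = d"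
  unfolding partial_dist_lin_kernel[OF assms(1)]
proof (rule Min_eqI)
  show "finite {weight (lin_kernel n G m) | m. length m = n \<and> (\<forall>i<k. m ! i = 0) \<and> m ! k = 1}"
    by (rule finite_subset[of _ "{..n}"]) (auto intro: order_trans[OF weight_le_length])
  let ?e = "replicate k 0 @ 1 # replicate (n - Suc k) 0"
  have "length ?e = n" "\<forall>i<k. ?e ! i = 0" "?e ! k = 1"
    using assms(1) by (auto simp: nth_append)
  moreover have "weight (lin_kernel n G ?e) = d"
    using row by (simp add: lin_kernel_unit assms(1))
  ultimately show "d \<in> {weight (lin_kernel n G m) | m. length m = n \<and> (\<forall>i<k. m ! i = 0) \<and> m ! k = 1}"
    by blast
qed (use lower in blast)

lemma partial_dist_le:
  assumes "is_kernel l g" "i < l"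
  shows "partial_dist l g i \<le> l"
proof -
  let ?S = "{hdist (g (w @ [0] @ u)) (g (w @ [1] @ v)) | w u v.
      length w = i \<and> length u = l - i - 1 \<and> length v = l - i - 1}"
  have len: "length (g x) = l" if "length x = l" for x
    using assms(1) that unfolding is_kernel_def bij_betw_def bvecs_def by blast
  have "?S \<subseteq> {..l}"
  proof
    fix d assume "d \<in> ?S"
    then obtain w u v where "d = hdist (g (w @ [0] @ u)) (g (w @ [1] @ v))"
      and "length (w @ [0] @ u) = l"
      using assms(2) by auto
    then show "d \<in> {..l}" using len hdist_le_length by (metis atMost_iff)
  qed
  moreover have "?S \<noteq> {}"
  proof -
    let ?z = "replicate (l - i - 1) (0::bit)"
    have "hdist (g (replicate i 0 @ [0] @ ?z)) (g (replicate i 0 @ [1] @ ?z)) \<in> ?S" by fastforce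
    then show ?thesis by blast
  qed
  ultimately have "Min ?S \<in> {..l}"
    using finite_subset[of ?S "{..l}"] Min_in[of ?S] by blast
  then show ?thesis unfolding partial_dist_def by simp
qed

text \<open>Only finitely many exponents occur: each is determined by $l$ partial distances,
  all at most $l$.\<close>
lemma kernel_exponent_le_E_max:
  assumes "is_kernel l g"
  shows "kernel_exponent l g \<le> E_max l"
proof -
  let ?F = "\<lambda>ds. 1 / real l * (\<Sum>i<l. log (real l) (real (ds ! i)))"
  have "{kernel_exponent l h | h. is_kernel l h} \<subseteq> ?F ` {ds. set ds \<subseteq> {..l} \<and> length ds = l}"
  proof
    fix e assume "e \<in> {kernel_exponent l h | h. is_kernel l h}"
    then obtain h where e: "e = kernel_exponent l h" and h: "is_kernel l h" by blast
    have "e = ?F (map (partial_dist l h) [0..<l])"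
      unfolding e kernel_exponent_def by (intro arg_cong2[where f = "(*)"] sum.cong) auto
    moreover have "set (map (partial_dist l h) [0..<l]) \<subseteq> {..l}"
      using partial_dist_le[OF h] by auto
    ultimately show "e \<in> ?F ` {ds. set ds \<subseteq> {..l} \<and> length ds = l}"
      by (intro image_eqI[of e ?F "map (partial_dist l h) [0..<l]"]) auto
  qed
  then have "finite {kernel_exponent l h | h. is_kernel l h}"
    by (rule finite_subset) (intro finite_imageI finite_lists_length_eq, simp)
  then show ?thesis unfolding E_max_def using assms by (intro Max_ge) auto
qed

lemma dot_lin_kernel_eq_0:
  assumes "length m = n" "length h = n" "\<forall>i<k. m ! i = 0"
    and rows: "\<forall>i. k \<le> i \<longrightarrow> i < n \<longrightarrow> (\<Sum>j<n. G i j * h ! j) = 0"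
  shows "dot (lin_kernel n G m) h = 0"
proof -
  have "dot (lin_kernel n G m) h = (\<Sum>j<n. \<Sum>i<n. m ! i * (G i j * h ! j))"
    using assms(2) by (simp add: dot_eq_sum nth_lin_kernel sum_distrib_right mult.assoc)
  also have "\<dots> = (\<Sum>i<n. m ! i * (\<Sum>j<n. G i j * h ! j))"
    by (subst sum.swap) (simp add: sum_distrib_left)
  also have "\<dots> = 0"
    using assms(3) rows by (intro sum.neutral) (metis lessThan_iff mult_zero_left mult_zero_right not_le)
  finally show ?thesis .
qed

lemma nth_lin_kernel_split:
  assumes "k < n" "j < n" "\<forall>i<k. m ! i = 0" "m ! k = 1"
  shows "lin_kernel n G m ! j = G k j + (\<Sum>i<n - Suc k. m ! (Suc k + i) * G (Suc k + i) j)"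
proof -
  let ?f = "\<lambda>i. m ! i * G i j"
  have "lin_kernel n G m ! j = sum ?f {0..<k} + sum ?f {k..<n}"
    using assms(1,2) by (simp add: nth_lin_kernel sum.atLeastLessThan_concat atLeast0LessThan[symmetric])
  also have "sum ?f {0..<k} = 0" using assms(3) by simp
  also have "sum ?f {k..<n} = ?f k + sum ?f {Suc k..<n}"
    using assms(1) by (rule sum.atLeast_Suc_lessThan)
  also have "sum ?f {Suc k..<n} = (\<Sum>i<n - Suc k. ?f (Suc k + i))"
    by (simp add: sum.atLeastLessThan_shift_0[of _ "Suc k"] atLeast0LessThan)
  finally show ?thesis using assms(4) by simp
qed

fun min_coset_weight :: "bit list \<Rightarrow> bit list list \<Rightarrow> nat" where
  "min_coset_weight a [] = weight a"
| "min_coset_weight a (r # rs) = min (min_coset_weight a rs) (min_coset_weight (map2 (+) a r) rs)"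

lemma min_coset_weight_le:
  assumes "\<forall>r\<in>set rs. length r = length a" "length c = length a"
    and "\<forall>j<length a. c ! j = a ! j + (\<Sum>i<length rs. z i * rs ! i ! j)"
  shows "min_coset_weight a rs \<le> weight c"
  using assms
proof (induction rs arbitrary: a z)
  case Nil
  then have "c = a" by (simp add: nth_equalityI)
  then show ?case by simp
next
  case (Cons r rs)
  define a' where "a' = (if z 0 = 0 then a else map2 (+) a r)"
  have "length a' = length a" using Cons.prems(1) by (simp add: a'_def)
  moreover have "a' ! j + (\<Sum>i<length rs. z (Suc i) * rs ! i ! j)
      = a ! j + (\<Sum>i<length (r # rs). z i * (r # rs) ! i ! j)" if "j < length a" for j
  proof -
    have "(\<Sum>i<length (r # rs). z i * (r # rs) ! i ! j)
        = z 0 * r ! j + (\<Sum>i<length rs. z (Suc i) * rs ! i ! j)"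
      by (simp only: length_Cons sum.lessThan_Suc_shift nth_Cons_0 nth_Cons_Suc)
    then show ?thesis
      using that Cons.prems(1) by (cases "z 0") (simp_all add: a'_def ac_simps)
  qed
  ultimately have "min_coset_weight a' rs \<le> weight c"
    using Cons.prems by (intro Cons.IH[of a' "\<lambda>i. z (Suc i)"]) auto
  then show ?case by (cases "z 0") (simp_all add: a'_def)
qed

section \<open>Matrices given by lists of rows\<close>

definition mat_of_rows :: "'a list list \<Rightarrow> nat \<Rightarrow> nat \<Rightarrow> 'a" where
  "mat_of_rows rows i j = rows ! i ! j"

definition mat_mult_rows :: "'a::semiring_0 list list \<Rightarrow> 'a list list \<Rightarrow> 'a list list" where
  "mat_mult_rows A B = map (\<lambda>r. map (dot r) (transpose B)) A"

definition id_rows :: "nat \<Rightarrow> 'a::semiring_1 list list" where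
  "id_rows n = map (\<lambda>i. map (\<lambda>j. of_bool (i = j)) [0..<n]) [0..<n]"

lemma sum_row_mat_of_rows:
  assumes "length (A ! i) = n" "length h = n"
  shows "(\<Sum>j<n. mat_of_rows A i j * h ! j) = dot (A ! i) h"
  using assms by (simp add: mat_of_rows_def dot_eq_sum)

lemma sum_mat_of_rows_mult:
  assumes "length B = n" "\<forall>r\<in>set B. length r = n" "length r = n" "m < n"
  shows "(\<Sum>j<n. r ! j * mat_of_rows B j m) = dot r (transpose B ! m)"
proof -
  have "length (transpose B) = n" using assms by (intro length_transpose_rows) auto
  then have "transpose B ! m = map (\<lambda>b. b ! m) B"
    using assms by (simp add: nth_transpose filter_True)
  then show ?thesis using assms by (simp add: dot_eq_sum mat_of_rows_def)
qed

lemma mat_invertible_of_rows: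
  assumes "length A = n" "length B = n" "\<forall>r\<in>set A \<union> set B. length r = n"
    and "mat_mult_rows A B = id_rows n" "mat_mult_rows B A = id_rows n"
  shows "mat_invertible n (mat_of_rows A)"
proof -
  have "(\<Sum>k<n. mat_of_rows X i k * mat_of_rows Y k j) = (if i = j then 1 else 0)"
    if "length X = n" "length Y = n" "\<forall>r\<in>set X \<union> set Y. length r = n"
      "mat_mult_rows X Y = id_rows n" "i < n" "j < n" for X Y :: "bit list list" and i j
  proof -
    have "(\<Sum>k<n. mat_of_rows X i k * mat_of_rows Y k j) = dot (X ! i) (transpose Y ! j)"
      using that by (simp add: mat_of_rows_def[of X] sum_mat_of_rows_mult)
    also have "\<dots> = mat_mult_rows X Y ! i ! j"
    proof -
      have "length (transpose Y) = n" using that by (intro length_transpose_rows) auto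
      then show ?thesis using that(1,5,6) by (simp add: mat_mult_rows_def)
    qed
    also have "\<dots> = (if i = j then 1 else 0)" using that(4-6) by (simp add: id_rows_def)
    finally show ?thesis .
  qed
  then show ?thesis
    unfolding mat_invertible_def using assms by (intro exI[of _ "mat_of_rows B"]) blast
qed

lemma dot_lin_kernel_rows_eq_0:
  assumes "length rows = n" "\<forall>r\<in>set rows. length r = n" "length m = n" "length h = n"
    and "\<forall>i<k. m ! i = 0" "\<forall>i\<in>{k..<n}. dot (rows ! i) h = 0"
  shows "dot (lin_kernel n (mat_of_rows rows) m) h = 0"
  using assms by (intro dot_lin_kernel_eq_0[where k = k]) (simp_all add: sum_row_mat_of_rows)

lemma min_coset_weight_le_weight_lin_kernel:
  assumes k: "k < n" and rows: "length rows = n" "\<forall>r\<in>set rows. length r = n"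
    and m: "\<forall>i<k. m ! i = 0" "m ! k = 1"
  shows "min_coset_weight (rows ! k) (drop (Suc k) rows) \<le> weight (lin_kernel n (mat_of_rows rows) m)"
proof (rule min_coset_weight_le[where z = "\<lambda>i. m ! (Suc k + i)"])
  have row_length: "length (rows ! i) = n" if "i < n" for i
    using rows that by simp
  then show "\<forall>r\<in>set (drop (Suc k) rows). length r = length (rows ! k)"
    using rows k by (auto dest: in_set_dropD)
  show "length (lin_kernel n (mat_of_rows rows) m) = length (rows ! k)"
    using row_length k by simp
  show "\<forall>j<length (rows ! k). lin_kernel n (mat_of_rows rows) m ! j = rows ! k ! j
      + (\<Sum>i<length (drop (Suc k) rows). m ! (Suc k + i) * drop (Suc k) rows ! i ! j)"
    using nth_lin_kernel_split[OF k _ m] row_length k rows(1) by (simp add: mat_of_rows_def)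
qed

section \<open>A kernel of dimension 22\<close>

definition G22 :: "bit list list" where
  "G22 =
   [[1,0,0,0,0,0,0,0,0,0,0,0,0,0,0,0,0,0,0,0,0,0],
    [0,0,0,0,0,0,0,0,0,0,0,0,0,0,0,1,0,0,0,0,0,1],
    [0,1,0,0,0,0,0,0,1,0,0,0,0,0,0,0,0,0,0,0,0,0],
    [0,0,1,0,1,0,0,0,0,0,0,0,0,0,0,0,0,0,0,0,0,0],
    [0,0,0,0,0,0,0,0,0,0,0,0,0,0,1,0,0,1,0,0,0,0],
    [0,0,0,0,0,0,0,0,0,1,0,0,1,0,0,0,0,0,0,0,0,0],
    [1,1,1,0,0,0,0,0,0,0,1,0,0,0,0,0,0,0,0,0,0,0],
    [0,0,0,0,0,0,1,0,0,0,0,0,0,1,1,0,0,0,0,0,1,0],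
    [0,0,0,0,1,0,0,0,0,0,0,0,0,1,0,0,0,1,0,0,0,1],
    [1,1,0,0,1,0,0,0,0,0,0,0,0,0,0,0,0,0,0,0,0,1],
    [1,0,0,0,0,0,0,0,0,0,0,1,0,0,0,1,0,0,0,0,1,0],
    [0,0,0,0,0,0,0,0,0,0,0,0,1,1,0,0,0,1,0,0,1,0],
    [0,0,1,1,1,1,0,0,0,0,1,0,0,0,0,0,0,1,1,0,0,1],
    [1,0,0,0,0,1,1,0,0,0,1,0,0,1,0,0,0,0,1,1,0,1],
    [0,0,0,1,1,1,0,0,0,1,0,0,0,1,0,0,0,0,0,1,1,1],
    [1,0,0,0,0,0,1,0,0,0,0,0,1,0,0,1,1,1,0,1,0,1],
    [1,0,0,1,1,0,0,1,1,0,0,0,0,1,0,0,1,0,0,0,1,0],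
    [0,0,0,0,1,0,0,0,0,1,0,1,1,0,1,1,1,1,0,0,0,0],
    [1,1,0,0,0,1,0,0,1,0,0,0,0,1,1,0,1,0,1,0,0,0],
    [0,0,1,0,1,0,1,1,1,0,1,0,0,1,1,1,1,0,0,0,1,1],
    [0,1,0,1,0,1,1,1,1,0,1,1,0,1,1,0,0,0,1,1,0,0],
    [1,0,1,1,1,1,1,1,1,1,0,1,1,0,1,1,1,1,1,0,0,0]]"

definition G22_inv :: "bit list list" where
  "G22_inv =
   [[1,0,0,0,0,0,0,0,0,0,0,0,0,0,0,0,0,0,0,0,0,0],
    [1,0,1,1,1,1,1,0,0,1,0,1,0,0,0,1,1,1,1,0,1,0],
    [1,1,0,0,1,0,1,1,0,0,1,1,1,0,0,1,0,0,0,1,1,0],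
    [1,0,0,0,1,0,0,0,1,0,0,1,0,1,0,1,0,1,0,1,0,1],
    [1,1,0,1,1,0,1,1,0,0,1,1,1,0,0,1,0,0,0,1,1,0],
    [1,1,1,0,1,0,0,0,0,1,0,1,1,0,1,0,0,0,1,0,1,1],
    [1,1,1,1,0,0,1,1,0,1,0,1,0,1,0,1,0,0,1,0,0,0],
    [1,0,1,0,1,0,1,1,1,1,1,0,0,1,0,0,1,0,0,1,1,0],
    [1,0,0,1,1,1,1,0,0,1,0,1,0,0,0,1,1,1,1,0,1,0],
    [1,1,1,1,1,1,1,0,0,1,0,0,0,1,0,1,0,0,1,0,0,0],
    [1,1,1,1,0,1,1,1,0,1,1,0,1,0,0,0,1,1,1,1,0,0],
    [1,1,1,0,0,0,0,1,1,1,0,0,1,1,0,0,0,0,1,1,1,0],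
    [1,1,1,1,1,0,1,0,0,1,0,0,0,1,0,1,0,0,1,0,0,0],
    [1,0,1,1,0,0,0,1,0,0,0,0,0,0,0,0,1,1,1,0,0,1],
    [1,0,0,0,0,1,1,1,1,0,0,1,0,0,0,1,0,0,0,0,1,1],
    [1,0,1,0,0,1,0,1,0,0,1,0,1,0,0,0,1,1,1,1,0,0],
    [1,0,0,1,0,0,1,1,1,1,0,1,1,1,0,1,1,0,0,1,0,0],
    [1,0,0,0,1,1,1,1,1,0,0,1,0,0,0,1,0,0,0,0,1,1],
    [1,1,1,0,1,1,0,1,0,0,0,1,0,1,1,0,0,1,1,1,0,1],
    [1,1,0,1,0,1,0,1,0,1,0,1,1,1,0,1,1,0,0,1,1,1],
    [1,1,0,0,0,1,0,0,1,1,0,0,0,1,0,0,1,1,0,0,1,0],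
    [1,1,1,0,0,1,0,1,0,0,1,0,1,0,0,0,1,1,1,1,0,0]]"

definition G22_checks :: "bit list list" where
  "G22_checks =
   [[1,1,1,1,1,1,1,1,1,1,1,1,1,1,1,1,1,1,1,1,1,1],
    [0,1,1,1,0,1,1,1,1,1,0,0,0,1,1,1,1,0,0,0,1,1],
    [0,1,0,0,0,0,0,0,1,1,1,0,0,0,1,1,0,1,1,1,1,1],
    [0,1,1,1,0,0,0,0,0,1,0,1,1,0,0,1,1,1,0,1,0,1],
    [1,1,0,1,1,1,0,0,0,0,0,1,0,1,1,0,0,1,1,1,0,1],
    [1,0,1,1,0,1,0,1,0,0,0,1,0,0,1,1,0,1,1,0,1,1]]"

definition D22 :: "nat list" where
  "D22 = [1,2,2,2,2,2,4,4,4,4,4,4,8,8,8,8,8,8,8,12,12,16]"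

lemma D22_initial: "D22 ! 0 = 1" "\<forall>k\<in>{1..<6}. D22 ! k = 2" "\<forall>k\<in>{6..<12}. D22 ! k = 4"
  by code_simp+

lemma G22_dims:
  "length G22 = 22" "length G22_inv = 22" "\<forall>r\<in>set G22 \<union> set G22_inv \<union> set G22_checks. length r = 22"
  by code_simp+

lemma G22_inverse: "mat_mult_rows G22 G22_inv = id_rows 22" "mat_mult_rows G22_inv G22 = id_rows 22"
  by code_simp+

lemma G22_row_weights: "map weight G22 = D22"
  by code_simp

lemma G22_even_rows: "\<forall>i\<in>{1..<22}. dot (G22 ! i) (replicate 22 1) = 0"
  by code_simp

lemma G22_checks_orthogonal: "\<forall>i\<in>{6..<22}. \<forall>h\<in>set G22_checks. dot (G22 ! i) h = 0"
  by code_simp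

lemma G22_checks_ones: "replicate 22 1 \<in> set G22_checks"
  by code_simp

lemma G22_checks_distinct_columns: "distinct (transpose G22_checks)"
  by code_simp

lemma G22_min_coset_weights: "\<forall>k\<in>{12..<22}. min_coset_weight (G22 ! k) (drop (Suc k) G22) = D22 ! k"
  by code_simp

lemma mat_invertible_G22: "mat_invertible 22 (mat_of_rows G22)"
  using G22_dims G22_inverse by (intro mat_invertible_of_rows) auto

lemma D22_le_weight:
  assumes k: "k < 22" and m: "length m = 22" "\<forall>i<k. m ! i = 0" "m ! k = 1"
  shows "D22 ! k \<le> weight (lin_kernel 22 (mat_of_rows G22) m)"
proof -
  let ?c = "lin_kernel 22 (mat_of_rows G22) m"
  have "m \<noteq> replicate 22 0" using k m by auto
  with mat_invertible_G22 m(1) have pos: "0 < weight ?c" by (rule weight_lin_kernel_pos)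
  have orth: "dot ?c h = 0"
    if "length h = 22" "l \<le> k" "\<forall>i\<in>{l..<22}. dot (G22 ! i) h = 0" for h l
    using G22_dims m that by (intro dot_lin_kernel_rows_eq_0[where k = l]) auto
  consider "k = 0" | "1 \<le> k" "k < 6" | "6 \<le> k" "k < 12" | "12 \<le> k" by linarith
  then show ?thesis
  proof cases
    case 1
    then show ?thesis using pos D22_initial(1) by simp
  next
    case 2
    then have "D22 ! k = 2" using D22_initial(2) by simp
    moreover have "2 \<le> weight ?c"
      using pos orth[of "replicate 22 1" 1] G22_even_rows 2 by (intro weight_ge_2) auto
    ultimately show ?thesis by simp
  next
    case 3
    then have "D22 ! k = 4" using D22_initial(3) by simp
    moreover have "4 \<le> weight ?c"
      using pos G22_checks_ones G22_checks_distinct_columns G22_dims(3) G22_checks_orthogonal 3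
      by (intro weight_ge_4) (auto intro: orth[where l = 6])
    ultimately show ?thesis by simp
  next
    case 4
    then show ?thesis
      using min_coset_weight_le_weight_lin_kernel[OF k G22_dims(1) _ m(2,3)] G22_dims(3)
        G22_min_coset_weights k by simp
  qed
qed

lemma partial_dist_G22:
  assumes "k < 22"
  shows "partial_dist 22 (lin_kernel 22 (mat_of_rows G22)) k = D22 ! k"
proof (rule partial_dist_lin_kernel_eqI[OF assms])
  show "weight (map (mat_of_rows G22 k) [0..<22]) = D22 ! k"
  proof -
    have "map (mat_of_rows G22 k) [0..<22] = G22 ! k"
      using G22_dims assms by (intro nth_equalityI) (simp_all add: mat_of_rows_def)
    moreover have "weight (G22 ! k) = D22 ! k"
      using G22_dims(1) assms by (simp flip: G22_row_weights)
    ultimately show ?thesis by simp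
  qed
qed (use D22_le_weight assms in blast)

section \<open>The exponent\<close>

lemma ln_one_plus_bounds:
  fixes x :: real
  assumes "0 \<le> x" "x < 1"
  shows "x - x^2/2 + x^3/3 - x^4/4 \<le> ln (1 + x)" "ln (1 + x) \<le> x - x^2/2 + x^3/3 - x^4/4 + x^5/5"
  using ln_bounds[OF assms, of 2] by (simp_all add: eval_nat_numeral add.commute)

text \<open>The logarithms of 2, 3, 5 and 11 are pinned down by those of
  10/9, 25/24, 81/80 and 121/120, where the alternating series converges fast.\<close>
lemma exponent_approx:
  "\<bar>(1/22) * ((46 * ln 2 + 2 * ln 3) / ln 22) - (0.50118::real)\<bar> < 0.000005"
proof -
  have a: "ln (10/9::real) = ln 2 + ln 5 - 2 * ln 3"
    using ln_div[of 10 9] ln_mult[of 2 5] ln_realpow[of 3 2] by simp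
  have b: "ln (25/24::real) = 2 * ln 5 - 3 * ln 2 - ln 3"
    using ln_div[of 25 24] ln_realpow[of 5 2] ln_mult[of 8 3] ln_realpow[of 2 3] by simp
  have c: "ln (81/80::real) = 4 * ln 3 - 4 * ln 2 - ln 5"
    using ln_div[of 81 80] ln_realpow[of 3 4] ln_mult[of 16 5] ln_realpow[of 2 4] by simp
  have d: "ln (121/120::real) = 2 * ln 11 - 3 * ln 2 - ln 3 - ln 5"
    using ln_div[of 121 120] ln_realpow[of 11 2] ln_mult[of 24 5] ln_mult[of 8 3] ln_realpow[of 2 3]
    by simp
  have e: "ln (22::real) = ln 2 + ln 11"
    using ln_mult[of 2 11] by simp
  have l1: "2765/26244 \<le> ln (10/9::real)" "ln (10/9::real) \<le> 124429/1180980"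
    using ln_one_plus_bounds[of "1/9"] by (simp_all add: power_divide)
  have l2: "54175/1327104 \<le> ln (25/24::real)" "ln (25/24::real) \<le> 1625251/39813120"
    using ln_one_plus_bounds[of "1/24"] by (simp_all add: power_divide)
  have l3: "6105917/491520000 \<le> ln (81/80::real)" "ln (81/80::real) \<le> 610591703/49152000000"
    using ln_one_plus_bounds[of "1/80"] by (simp_all add: power_divide)
  have l4: "2294453/276480000 \<le> ln (121/120::real)" "ln (121/120::real) \<le> 1032503851/124416000000"
    using ln_one_plus_bounds[of "1/120"] by (simp_all add: power_divide)
  note bounds = l1 l2 l3 l4 a b c d e
  have "501175/1000000 * (22 * ln 22) < 46 * ln 2 + 2 * ln (3::real)"
    using bounds by linarith
  moreover have "46 * ln 2 + 2 * ln (3::real) < 501185/1000000 * (22 * ln 22)"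
    using bounds by linarith
  moreover have "0 < ln (22::real)" by simp
  ultimately show ?thesis
    unfolding abs_less_iff by (simp add: field_simps)
qed

lemma sum_log_D22: "(\<Sum>i<22. log 22 (real (D22 ! i))) = (46 * ln 2 + 2 * ln 3) / ln 22"
proof -
  have "length D22 = 22" by (simp add: D22_def)
  then have "(\<Sum>i<22. log 22 (real (D22 ! i))) = (\<Sum>d\<leftarrow>D22. ln (real d)) / ln 22"
    by (simp add: sum_list_sum_nth log_def atLeast0LessThan sum_divide_distrib)
  also have "(\<Sum>d\<leftarrow>D22. ln (real d)) = 46 * ln 2 + 2 * ln 3"
    using ln_realpow[of 2 2] ln_realpow[of 2 3] ln_realpow[of 2 4] ln_mult[of 4 3]
    by (simp add: D22_def)
  finally show ?thesis .
qed

theorem mainTheorem15: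
  shows "\<exists>G. mat_invertible 22 G \<and>
    map (partial_dist 22 (lin_kernel 22 G)) [0..<22] =
      [1,2,2,2,2,2,4,4,4,4,4,4,8,8,8,8,8,8,8,12,12,16] \<and>
    E_max 22 \<ge> (1 / 22) * (\<Sum>i<22. log 22 (real (partial_dist 22 (lin_kernel 22 G) i))) \<and>
    \<bar>(1 / 22) * (\<Sum>i<22. log 22 (real (partial_dist 22 (lin_kernel 22 G) i))) - 0.50118\<bar> < 0.000005"
proof (intro exI conjI)
  let ?g = "lin_kernel 22 (mat_of_rows G22)"
  show "mat_invertible 22 (mat_of_rows G22)" by (rule mat_invertible_G22)
  have partial_dists: "map (partial_dist 22 ?g) [0..<22] = D22"
    by (rule nth_equalityI) (simp_all add: partial_dist_G22, simp add: D22_def)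
  then show "map (partial_dist 22 ?g) [0..<22] = [1,2,2,2,2,2,4,4,4,4,4,4,8,8,8,8,8,8,8,12,12,16]"
    by (simp add: D22_def)
  show "E_max 22 \<ge> (1 / 22) * (\<Sum>i<22. log 22 (real (partial_dist 22 ?g i)))"
    using kernel_exponent_le_E_max[OF is_kernel_lin_kernel[OF mat_invertible_G22]]
    by (simp add: kernel_exponent_def)
  have "(\<Sum>i<22. log 22 (real (partial_dist 22 ?g i))) = (46 * ln 2 + 2 * ln 3) / ln 22"
    using sum_log_D22 by (simp add: partial_dist_G22)
  then show "\<bar>(1 / 22) * (\<Sum>i<22. log 22 (real (partial_dist 22 ?g i))) - 0.50118\<bar> < 0.000005"
    using exponent_approx by simp
qed

end
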